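(* Let $D\subset\mathbb R^N$ be a domain and $p\ge2$. For $f,g\in L^p(D)$ set \[ w(p,f,g)^2=p(p-1)\int_0^1 s|sg+(1-s)f|^{p-2}ds \] pointwise, and $E(f,g)=\|f\|_{L^p(D)}^p+(p-1)\|g\|_{L^p(D)}^p-p\int_D|g|^{p-2}gf\,dx$. Then $E(f,g)=\|w(p,f,g)(f-g)\|^2_{L^2(D)}$, and moreover: (1) (First type.) Let \[ \lambda_p=\min_{x\in[1/2,1]}\{x^p+(1-x)^{p-1}(x+p-1)\}. \] Then $\lambda_p\in[2^{-p},p\,2^{1-p}]$, $\lambda_2=1$, and for all $f,g\in L^p(D)$, \[ E(f,g)=\|w(p,f,g)(f-g)\|^2_{L^2(D)}\ge\lambda_p\|f-g\|^p_{L^p(D)}. \] (2) (Second type.) For all $f,g\in L^p(D)$, \[ E(f,g)=\|w(p,f,g)(f-g)\|^2_{L^2(D)}\ge\frac p2\int_D|g|^{p-2}(f-g)^2dx. \] *)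

theory Defs
  imports "HOL-Analysis.Analysis"
begin

text \<open>|x|^a with the convention |x|^0 = 1 (also at x = 0), as in the paper
  (for p = 2 the weight |.|^(p-2) is identically 1).\<close>
definition abspow :: "real \<Rightarrow> real \<Rightarrow> real" where
  "abspow x a = (if a = 0 then 1 else \<bar>x\<bar> powr a)"

definition in_Lp :: "real \<Rightarrow> ('a::euclidean_space) set \<Rightarrow> ('a \<Rightarrow> real) \<Rightarrow> bool" where
  "in_Lp p D f \<longleftrightarrow> f \<in> borel_measurable (lebesgue_on D)
      \<and> integrable (lebesgue_on D) (\<lambda>x. \<bar>f x\<bar> powr p)"

definition wfun :: "real \<Rightarrow> ('a \<Rightarrow> real) \<Rightarrow> ('a \<Rightarrow> real) \<Rightarrow> 'a \<Rightarrow> real" where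
  "wfun p f g x = sqrt (p * (p - 1) *
      integral {0..1} (\<lambda>s::real. s * abspow (s * g x + (1 - s) * f x) (p - 2)))"

definition Efun :: "real \<Rightarrow> ('a::euclidean_space) set \<Rightarrow> ('a \<Rightarrow> real) \<Rightarrow> ('a \<Rightarrow> real) \<Rightarrow> real" where
  "Efun p D f g = (\<integral>x. \<bar>f x\<bar> powr p \<partial>lebesgue_on D)
     + (p - 1) * (\<integral>x. \<bar>g x\<bar> powr p \<partial>lebesgue_on D)
     - p * (\<integral>x. abspow (g x) (p - 2) * g x * f x \<partial>lebesgue_on D)"

definition lambda_p :: "real \<Rightarrow> real" where
  "lambda_p p = Inf ((\<lambda>x. x powr p + (1 - x) powr (p - 1) * (x + p - 1)) ` {1/2..1})"

end

theory Submission
  imports Defs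
begin

text \<open>
  Pointwise, the integrand of \<open>E(f,g)\<close> is the Bregman divergence \<open>B(a,b)\<close> of \<open>\<phi> = |.|^p\<close>,
  and Taylor's formula with integral remainder writes it as
  \<open>(a - b)^2 \<integral>_0^1 s \<phi>''(s b + (1 - s) a) ds = (w (a - b))^2\<close>.
  Both lower bounds are pointwise inequalities for \<open>B\<close>, which is positively
  \<open>p\<close>-homogeneous. For the first one normalise \<open>a - b = 1\<close>: the function
  \<open>x \<mapsto> B(x, x - 1)\<close> increases for \<open>x \<ge> 1\<close>, and its value at \<open>x \<le> 1/2\<close> dominates the one
  at \<open>1 - x\<close>, so its infimum is taken on \<open>[1/2, 1]\<close>, where it is
  \<open>x^p + (1 - x)^(p-1) (x + p - 1)\<close>. For the second one normalise \<open>b = 1\<close> and compare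
  \<open>B(a, 1)\<close> with \<open>p/2 (a - 1)^2\<close>: the difference decreases towards \<open>\<plusminus>1\<close>, where it
  vanishes.
\<close>

lemma abspow_nonneg: "abspow x a \<ge> 0"
  by (simp add: abspow_def)

lemma abspow_abs [simp]: "abspow \<bar>x\<bar> a = abspow x a"
  by (simp add: abspow_def)

lemma abspow_minus [simp]: "abspow (- x) a = abspow x a"
  by (simp add: abspow_def)

lemma abspow_mult: "abspow (x * y) a = abspow x a * abspow y a"
  by (simp add: abspow_def abs_mult powr_mult)

lemma abspow_mono: "a \<ge> 0 \<Longrightarrow> \<bar>x\<bar> \<le> \<bar>y\<bar> \<Longrightarrow> abspow x a \<le> abspow y a"
  by (simp add: abspow_def powr_mono2)

lemma abspow_sub_one_sign:
  assumes "a \<ge> 0"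
  shows "0 \<le> (\<bar>x\<bar> - 1) * (abspow x a - 1)"
proof (cases "\<bar>x\<bar> \<le> 1")
  case True
  then have "abspow x a \<le> abspow 1 a" using assms by (intro abspow_mono) auto
  with True show ?thesis by (intro mult_nonpos_nonpos) (auto simp: abspow_def)
next
  case False
  then have "abspow 1 a \<le> abspow x a" using assms by (intro abspow_mono) auto
  with False show ?thesis by (intro mult_nonneg_nonneg) (auto simp: abspow_def)
qed

lemma continuous_on_abspow:
  assumes "a \<ge> 0" and "continuous_on S f"
  shows "continuous_on S (\<lambda>s. abspow (f s) a)"
proof (cases "a = 0")
  case False
  with assms have "continuous_on S (\<lambda>s. \<bar>f s\<bar> powr a)"
    by (intro continuous_on_powr' continuous_intros) auto
  with False show ?thesis by (simp add: abspow_def)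
qed (simp add: abspow_def)

lemma abspow_mult_self_eq_powr:
  assumes "p \<ge> 2" and "z \<ge> 0"
  shows "abspow z (p - 2) * z = z powr (p - 1)"
proof (cases "z = 0")
  case False
  have "z powr (p - 1) = z powr ((p - 2) + 1)" by simp
  also have "\<dots> = z powr (p - 2) * z" using assms by (simp only: powr_add) simp
  finally show ?thesis using False assms by (auto simp: abspow_def)
qed (use assms in \<open>simp add: abspow_def\<close>)

lemma abs_powr_eq_abspow_mult_square:
  assumes "p \<ge> 2"
  shows "\<bar>t\<bar> powr p = abspow t (p - 2) * t\<^sup>2"
proof -
  have "\<bar>t\<bar> powr p = abspow \<bar>t\<bar> (p - 2) * \<bar>t\<bar> * \<bar>t\<bar>"
    using abspow_mult_self_eq_powr[OF assms, of "\<bar>t\<bar>"] assms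
      powr_add[of "\<bar>t\<bar>" "p - 1" 1] by (cases "t = 0") simp_all
  then show ?thesis by (simp add: power2_eq_square)
qed

lemma has_real_derivative_abspow_mult_self:
  assumes p: "p \<ge> 2"
  shows "((\<lambda>t. abspow t (p - 2) * t) has_real_derivative (p - 1) * abspow t (p - 2)) (at t)"
proof (cases "p = 2")
  case False
  then have p2: "p > 2" using p by simp
  consider "t > 0" | "t < 0" | "t = 0" by linarith
  then show ?thesis
  proof cases
    case 1
    have "((\<lambda>z. z powr (p - 1)) has_real_derivative (p - 1) * abspow t (p - 2)) (at t)"
      using has_real_derivative_powr[OF 1, of "p - 1"] 1 p2 by (simp add: abspow_def)
    then show ?thesis
      by (rule has_field_derivative_transform_within_open[OF _ open_greaterThan, of _ _ t 0])
         (use 1 abspow_mult_self_eq_powr[OF p] in auto)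
  next
    case 2
    have "((\<lambda>z. z powr (p - 1)) has_real_derivative (p - 1) * (-t) powr (p - 2)) (at (-t))"
      using has_real_derivative_powr[of "-t" "p - 1"] 2 by simp
    from DERIV_minus[OF DERIV_chain2[OF this DERIV_minus[OF DERIV_ident]]]
    have "((\<lambda>z. - ((-z) powr (p - 1))) has_real_derivative (p - 1) * abspow t (p - 2)) (at t)"
      using 2 p2 by (simp add: abspow_def)
    then show ?thesis
    proof (rule has_field_derivative_transform_within_open[OF _ open_lessThan, of _ _ t 0])
      show "- ((-x) powr (p - 1)) = abspow x (p - 2) * x" if "x \<in> {..<0}" for x
        using abspow_mult_self_eq_powr[OF p, of "-x"] that by simp
    qed (use 2 in simp)
  next
    case 3
    have "((\<lambda>y. \<bar>y\<bar> powr (p - 2)) \<longlongrightarrow> \<bar>0\<bar> powr (p - 2)) (at 0)"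
      using p2 by (intro tendsto_intros) auto
    then have "((\<lambda>y. \<bar>y\<bar> powr (p - 2)) \<longlongrightarrow> 0) (at 0)"
      using p2 by simp
    then have "((\<lambda>y. (abspow y (p - 2) * y - abspow 0 (p - 2) * 0) / (y - 0)) \<longlongrightarrow> 0) (at 0)"
      by (rule Lim_transform_eventually)
         (use p2 in \<open>auto simp: abspow_def eventually_at_filter\<close>)
    then show ?thesis using 3 p2 by (simp add: has_field_derivative_iff abspow_def)
  qed
qed (simp add: abspow_def)

lemma has_real_derivative_abs_powr:
  assumes p: "p \<ge> 2"
  shows "((\<lambda>t. \<bar>t\<bar> powr p) has_real_derivative p * (abspow t (p - 2) * t)) (at t)"
proof -
  have "((\<lambda>t. t * (abspow t (p - 2) * t)) has_real_derivative p * (abspow t (p - 2) * t)) (at t)"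
    by (rule DERIV_cong[OF DERIV_mult[OF DERIV_ident has_real_derivative_abspow_mult_self[OF p]]])
       (simp add: algebra_simps)
  then show ?thesis
    by (simp add: abs_powr_eq_abspow_mult_square[OF p] power2_eq_square mult_ac)
qed

lemma taylor_integral_remainder_01:
  fixes f f' f'' :: "real \<Rightarrow> real"
  assumes f': "\<And>x. (f has_real_derivative f' x) (at x)"
    and f'': "\<And>x. (f' has_real_derivative f'' x) (at x)"
  shows "f a - f b - f' b * (a - b)
    = (a - b)\<^sup>2 * integral {0..1} (\<lambda>s. s * f'' (s * b + (1 - s) * a))"
proof -
  define u where "u s = s * b + (1 - s) * a" for s :: real
  define G where "G s = - f (u s) - (a - b) * (s * f' (u s))" for s
  have du: "(u has_real_derivative b - a) (at s)" for s
    unfolding u_def by (auto intro!: derivative_eq_intros)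
  have "(G has_real_derivative (a - b)\<^sup>2 * (s * f'' (u s))) (at s)" for s
    unfolding G_def
    by (rule DERIV_cong[OF DERIV_diff[OF DERIV_minus[OF DERIV_chain2[OF f' du]]
          DERIV_cmult[OF DERIV_mult[OF DERIV_ident DERIV_chain2[OF f'' du]]]]])
       (simp add: algebra_simps power2_eq_square)
  then have "((\<lambda>s. (a - b)\<^sup>2 * (s * f'' (u s))) has_integral G 1 - G 0) {0..1}"
    by (intro fundamental_theorem_of_calculus)
       (auto simp: has_real_derivative_iff_has_vector_derivative[symmetric]
             intro: has_field_derivative_at_within)
  from integral_unique[OF this]
  have "(a - b)\<^sup>2 * integral {0..1} (\<lambda>s. s * f'' (u s)) = G 1 - G 0"
    by simp
  then show ?thesis
    unfolding G_def u_def by (simp add: algebra_simps)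
qed

text \<open>The Bregman divergence of \<open>|.|^p\<close>: \<open>|a|^p - |b|^p - p |b|^(p-2) b (a - b)\<close>.\<close>

definition bregman_pow :: "real \<Rightarrow> real \<Rightarrow> real \<Rightarrow> real" where
  "bregman_pow p a b = \<bar>a\<bar> powr p + (p - 1) * \<bar>b\<bar> powr p - p * (abspow b (p - 2) * b * a)"

lemma bregman_pow_eq_integral:
  assumes p: "p \<ge> 2"
  shows "bregman_pow p a b
    = p * (p - 1) * (a - b)\<^sup>2 * integral {0..1} (\<lambda>s. s * abspow (s * b + (1 - s) * a) (p - 2))"
proof -
  have "bregman_pow p a b = \<bar>a\<bar> powr p - \<bar>b\<bar> powr p - p * (abspow b (p - 2) * b) * (a - b)"
    by (simp add: bregman_pow_def abs_powr_eq_abspow_mult_square[OF p, of b] power2_eq_square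
        algebra_simps)
  also have "\<dots> = (a - b)\<^sup>2
      * integral {0..1} (\<lambda>s. s * (p * ((p - 1) * abspow (s * b + (1 - s) * a) (p - 2))))"
    by (rule taylor_integral_remainder_01[OF has_real_derivative_abs_powr[OF p]
          DERIV_cmult[OF has_real_derivative_abspow_mult_self[OF p]]])
  also have "\<dots> = (a - b)\<^sup>2
      * (p * ((p - 1) * integral {0..1} (\<lambda>s. s * abspow (s * b + (1 - s) * a) (p - 2))))"
  proof -
    have "s * (p * ((p - 1) * c)) = p * ((p - 1) * (s * c))" for s c :: real
      by (simp add: mult_ac)
    then show ?thesis by (simp only: integral_mult_right)
  qed
  finally show ?thesis
    by (simp add: mult_ac)
qed

lemma bregman_pow_scale:
  assumes p: "p \<ge> 2"
  shows "bregman_pow p (t * a) (t * b) = \<bar>t\<bar> powr p * bregman_pow p a b"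
proof -
  have homog: "\<bar>t * x\<bar> powr p = \<bar>t\<bar> powr p * \<bar>x\<bar> powr p" for x
    by (simp add: abs_mult powr_mult)
  have cross: "abspow (t * b) (p - 2) * (t * b) * (t * a) = \<bar>t\<bar> powr p * (abspow b (p - 2) * b * a)"
    by (simp add: abs_powr_eq_abspow_mult_square[OF p, of t] abspow_mult power2_eq_square mult_ac)
  show ?thesis
    unfolding bregman_pow_def homog cross by (simp add: algebra_simps)
qed

lemma le_of_derivative_sign_around:
  fixes m m' :: "real \<Rightarrow> real"
  assumes deriv: "\<And>x. (m has_real_derivative m' x) (at x)"
    and sign: "\<And>x. min c a < x \<Longrightarrow> x < max c a \<Longrightarrow> 0 \<le> (x - c) * m' x"
  shows "m c \<le> m a"
proof -
  have cont: "continuous_on S m" for S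
    using deriv by (meson DERIV_isCont continuous_at_imp_continuous_on)
  show ?thesis
  proof (cases "c \<le> a")
    case True
    show ?thesis
    proof (rule DERIV_nonneg_imp_increasing_open[OF True _ cont])
      fix x assume "c < x" "x < a"
      with sign[of x] have "0 \<le> m' x" by (simp add: zero_le_mult_iff)
      with deriv show "\<exists>y. (m has_real_derivative y) (at x) \<and> 0 \<le> y" by blast
    qed
  next
    case False
    show ?thesis
    proof (rule DERIV_nonpos_imp_decreasing_open[of a c, OF _ _ cont])
      fix x assume "a < x" "x < c"
      with sign[of x] have "m' x \<le> 0" by (simp add: zero_le_mult_iff)
      with deriv show "\<exists>y. (m has_real_derivative y) (at x) \<and> y \<le> 0" by blast
    qed (use False in simp)
  qed
qed

lemma bregman_pow_at_one_ge:
  assumes p: "p \<ge> 2"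
  shows "p / 2 * (a - 1)\<^sup>2 \<le> bregman_pow p a 1"
proof -
  define m where "m x = \<bar>x\<bar> powr p + (p - 1) - p * x - p / 2 * (x - 1)\<^sup>2" for x
  have m_eq: "m x = bregman_pow p x 1 - p / 2 * (x - 1)\<^sup>2" for x
    by (simp add: m_def bregman_pow_def abspow_def)
  have "(m has_real_derivative p * (abspow x (p - 2) * x) - p - p * (x - 1)) (at x)" for x
    unfolding m_def[abs_def]
    by (rule DERIV_cong[OF DERIV_diff[OF DERIV_diff[OF DERIV_add[OF has_real_derivative_abs_powr[OF p]
          DERIV_const] DERIV_cmult[OF DERIV_ident]]]])
       (auto intro!: derivative_eq_intros)
  then have deriv: "(m has_real_derivative p * x * (abspow x (p - 2) - 1)) (at x)" for x
    by (rule DERIV_cong) (simp add: algebra_simps)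
  \<comment> \<open>\<open>m'\<close> has the sign of \<open>x - sgn x\<close>, and \<open>m\<close> vanishes at \<open>sgn a\<close> for \<open>a \<noteq> 0\<close>\<close>
  have sign: "0 \<le> (x - sgn x) * (p * x * (abspow x (p - 2) - 1))" for x
  proof -
    have "(x - sgn x) * x = \<bar>x\<bar> * (\<bar>x\<bar> - 1)"
      by (auto simp: sgn_if algebra_simps)
    then have "(x - sgn x) * (p * x * (abspow x (p - 2) - 1))
        = p * \<bar>x\<bar> * ((\<bar>x\<bar> - 1) * (abspow x (p - 2) - 1))"
      by (simp add: algebra_simps)
    also have "\<dots> \<ge> 0"
      using p by (intro mult_nonneg_nonneg[OF _ abspow_sub_one_sign]) auto
    finally show ?thesis .
  qed
  have "m (sgn a) \<le> m a" if "a \<noteq> 0"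
  proof (rule le_of_derivative_sign_around[OF deriv])
    fix x assume "min (sgn a) a < x" "x < max (sgn a) a"
    with that have "sgn x = sgn a" by (auto simp: sgn_if split: if_splits)
    with sign[of x] show "0 \<le> (x - sgn a) * (p * x * (abspow x (p - 2) - 1))" by simp
  qed
  moreover have "m (sgn a) = 0" if "a \<noteq> 0"
    using that by (simp add: m_def sgn_if)
  ultimately show ?thesis
    using p by (cases "a = 0") (auto simp: m_eq bregman_pow_def abspow_def)
qed

lemma bregman_pow_ge_weighted_square:
  assumes p: "p \<ge> 2"
  shows "p / 2 * abspow b (p - 2) * (a - b)\<^sup>2 \<le> bregman_pow p a b"
proof (cases "b = 0")
  case True
  then show ?thesis
    using p by (cases "p = 2") (simp_all add: bregman_pow_def abspow_def)
next
  case False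
  have "p / 2 * abspow b (p - 2) * (a - b)\<^sup>2 = \<bar>b\<bar> powr p * (p / 2 * (a / b - 1)\<^sup>2)"
    using False by (simp add: abs_powr_eq_abspow_mult_square[OF p] field_simps power2_eq_square)
  also have "\<dots> \<le> \<bar>b\<bar> powr p * bregman_pow p (a / b) 1"
    by (intro mult_left_mono bregman_pow_at_one_ge[OF p]) auto
  also have "\<dots> = bregman_pow p (b * (a / b)) (b * 1)"
    by (rule bregman_pow_scale[OF p, symmetric])
  finally show ?thesis
    using False by simp
qed

lemma bregman_pow_nonneg:
  assumes p: "p \<ge> 2"
  shows "0 \<le> bregman_pow p a b"
  using p by (intro order_trans[OF _ bregman_pow_ge_weighted_square[OF p]] mult_nonneg_nonneg abspow_nonneg) auto

lemma integral_01_reflect: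
  fixes q :: "real \<Rightarrow> 'a::euclidean_space"
  shows "integral {0..1} (\<lambda>s. q (1 - s)) = integral {0..1} q"
proof -
  have "integral {0..1} (\<lambda>s. q (1 - s)) = integral {0..1} ((\<lambda>y. q (-y)) \<circ> (+) (-1))"
    by (simp add: o_def)
  also have "\<dots> = integral {-1..0} (\<lambda>y. q (-y))"
    using integral_shift_Icc_real[of 0 1 "\<lambda>y. q (-y)" "-1"] by simp
  also have "\<dots> = integral {0..1} q"
    using Henstock_Kurzweil_Integration.integral_reflect_real[of 1 0 q] by simp
  finally show ?thesis .
qed

lemma integral_01_one_minus_mult_le:
  fixes h :: "real \<Rightarrow> real"
  assumes cont: "continuous_on {0..1} h"
    and dominated: "\<And>s. 1/2 \<le> s \<Longrightarrow> s \<le> 1 \<Longrightarrow> h (1 - s) \<le> h s"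
  shows "integral {0..1} (\<lambda>s. (1 - s) * h s) \<le> integral {0..1} (\<lambda>s. s * h s)"
proof -
  define r where "r s = (2 * s - 1) * h s" for s
  have cont_reflected: "continuous_on {0..1} (\<lambda>s. h (1 - s))"
    by (rule continuous_on_compose2[OF cont]) (auto intro!: continuous_intros)
  have int: "(\<lambda>s. s * h s) integrable_on {0..1}" "(\<lambda>s. (1 - s) * h s) integrable_on {0..1}"
    "r integrable_on {0..1}" "(\<lambda>s. r (1 - s)) integrable_on {0..1}"
    unfolding r_def
    by (intro integrable_continuous_interval continuous_intros cont cont_reflected)+
  \<comment> \<open>symmetrising \<open>r\<close> under \<open>s \<mapsto> 1 - s\<close> leaves a pointwise nonnegative integrand\<close>
  have "0 \<le> integral {0..1} (\<lambda>s. r s + r (1 - s))"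
  proof (rule integral_nonneg)
    fix s :: real assume s: "s \<in> {0..1}"
    have "r s + r (1 - s) = (2 * s - 1) * (h s - h (1 - s))"
      by (simp add: r_def algebra_simps)
    also have "\<dots> \<ge> 0"
    proof (cases "s \<ge> 1/2")
      case True
      then show ?thesis using s dominated[of s] by (intro mult_nonneg_nonneg) auto
    next
      case False
      then show ?thesis using s dominated[of "1 - s"] by (intro mult_nonpos_nonpos) auto
    qed
    finally show "0 \<le> r s + r (1 - s)" .
  qed (use int in \<open>intro integrable_add\<close>)
  also have "\<dots> = 2 * integral {0..1} r"
    using integral_add[OF int(3,4)] integral_01_reflect[of r] by simp
  also have "integral {0..1} r = integral {0..1} (\<lambda>s. s * h s) - integral {0..1} (\<lambda>s. (1 - s) * h s)"
    unfolding integral_diff[OF int(1,2), symmetric] r_def by (rule integral_cong) (simp add: algebra_simps)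
  finally show ?thesis by simp
qed

lemma bregman_pow_unit_gap_eq_integral:
  assumes p: "p \<ge> 2"
  shows "bregman_pow p x (x - 1) = p * (p - 1) * integral {0..1} (\<lambda>s. s * abspow (x - s) (p - 2))"
  by (simp add: bregman_pow_eq_integral[OF p] algebra_simps)

lemma bregman_pow_unit_gap_mono:
  assumes p: "p \<ge> 2" and "1 \<le> x" "x \<le> y"
  shows "bregman_pow p x (x - 1) \<le> bregman_pow p y (y - 1)"
proof -
  have int: "(\<lambda>s. s * abspow (z - s) (p - 2)) integrable_on {0..1}" for z
    using p by (intro integrable_continuous_interval continuous_intros continuous_on_abspow) auto
  have "integral {0..1} (\<lambda>s. s * abspow (x - s) (p - 2))
      \<le> integral {0..1} (\<lambda>s. s * abspow (y - s) (p - 2))"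
    by (rule integral_le[OF int int]) (use assms in \<open>auto intro!: mult_left_mono abspow_mono\<close>)
  then show ?thesis
    unfolding bregman_pow_unit_gap_eq_integral[OF p] using p by (intro mult_left_mono) auto
qed

lemma bregman_pow_unit_gap_reflect:
  assumes p: "p \<ge> 2" and x: "x \<le> 1/2"
  shows "bregman_pow p (1 - x) (- x) \<le> bregman_pow p x (x - 1)"
proof -
  have "integral {0..1} (\<lambda>s. s * abspow (1 - x - s) (p - 2))
      = integral {0..1} (\<lambda>s. (1 - s) * abspow (1 - x - (1 - s)) (p - 2))"
    by (rule integral_01_reflect[of "\<lambda>s. s * abspow (1 - x - s) (p - 2)", symmetric])
  also have "\<dots> = integral {0..1} (\<lambda>s. (1 - s) * abspow (x - s) (p - 2))"
  proof (rule integral_cong)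
    fix s :: real
    have "1 - x - (1 - s) = - (x - s)" by simp
    then show "(1 - s) * abspow (1 - x - (1 - s)) (p - 2) = (1 - s) * abspow (x - s) (p - 2)"
      by (simp only: abspow_minus)
  qed
  also have "\<dots> \<le> integral {0..1} (\<lambda>s. s * abspow (x - s) (p - 2))"
  proof (rule integral_01_one_minus_mult_le)
    show "continuous_on {0..1} (\<lambda>s. abspow (x - s) (p - 2))"
      using p by (intro continuous_on_abspow continuous_intros) auto
    show "abspow (x - (1 - s)) (p - 2) \<le> abspow (x - s) (p - 2)" if "1/2 \<le> s" "s \<le> 1" for s
      using that x p by (intro abspow_mono) auto
  qed
  finally show ?thesis
    using bregman_pow_unit_gap_eq_integral[OF p, of "1 - x"] bregman_pow_unit_gap_eq_integral[OF p, of x] p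
    by (simp add: mult_left_mono)
qed

lemma bregman_pow_unit_gap_explicit:
  assumes p: "p \<ge> 2" and y: "1/2 \<le> y" "y \<le> 1"
  shows "bregman_pow p y (y - 1) = y powr p + (1 - y) powr (p - 1) * (y + p - 1)"
proof -
  have "abspow (y - 1) (p - 2) * (y - 1) = - (abspow (1 - y) (p - 2) * (1 - y))"
    by (simp add: abspow_def abs_minus_commute algebra_simps)
  also have "\<dots> = - ((1 - y) powr (p - 1))"
    using abspow_mult_self_eq_powr[OF p, of "1 - y"] y by simp
  finally have cross: "abspow (y - 1) (p - 2) * (y - 1) = - ((1 - y) powr (p - 1))" .
  have gap: "\<bar>y - 1\<bar> powr p = (1 - y) * (1 - y) powr (p - 1)"
    using y powr_add[of "1 - y" "p - 1" 1] by (simp add: abs_minus_commute mult.commute)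
  show ?thesis
    using y unfolding bregman_pow_def cross gap by (simp add: algebra_simps)
qed

lemma lambda_p_le:
  assumes p: "p \<ge> 1" and x: "1/2 \<le> x" "x \<le> 1"
  shows "lambda_p p \<le> x powr p + (1 - x) powr (p - 1) * (x + p - 1)"
  unfolding lambda_p_def
proof (rule cInf_lower)
  show "bdd_below ((\<lambda>x. x powr p + (1 - x) powr (p - 1) * (x + p - 1)) ` {1/2..1})"
    using p by (intro bdd_belowI2[of _ 0] add_nonneg_nonneg mult_nonneg_nonneg) auto
qed (use x in auto)

lemma lambda_p_bounds:
  assumes p: "p \<ge> 1"
  shows "lambda_p p \<in> {2 powr (-p) .. p * 2 powr (1 - p)}"
  unfolding atLeastAtMost_iff
proof
  have "2 powr (-p) \<le> x powr p + (1 - x) powr (p - 1) * (x + p - 1)"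
    if "1/2 \<le> x" "x \<le> 1" for x
  proof -
    have "2 powr (-p) = (1/2) powr p" by (simp add: powr_minus_divide powr_divide)
    also have "\<dots> \<le> x powr p" using that p by (intro powr_mono2) auto
    finally show ?thesis using that p by (intro add_increasing2 mult_nonneg_nonneg) auto
  qed
  then show "2 powr (-p) \<le> lambda_p p"
    unfolding lambda_p_def by (intro cInf_greatest) auto
  have "(1/2 :: real) powr p + (1 - 1/2) powr (p - 1) * (1/2 + p - 1) = p * 2 powr (1 - p)"
    by (simp add: powr_minus_divide powr_divide powr_diff field_simps)
  then show "lambda_p p \<le> p * 2 powr (1 - p)"
    using lambda_p_le[OF p, of "1/2"] by simp
qed

lemma lambda_p_two: "lambda_p 2 = 1"
proof -
  have "(\<lambda>x. x powr 2 + (1 - x) powr (2 - 1) * (x + 2 - 1)) ` {1/2..1::real} = {1}"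
    by (auto simp: power2_eq_square algebra_simps intro!: image_eqI[of _ _ 1])
  then show ?thesis unfolding lambda_p_def by simp
qed

lemma lambda_p_le_bregman_pow_unit_gap:
  assumes p: "p \<ge> 2"
  shows "lambda_p p \<le> bregman_pow p x (x - 1)"
proof -
  have right_half: "lambda_p p \<le> bregman_pow p y (y - 1)" if "1/2 \<le> y" for y
  proof (cases "y \<le> 1")
    case True
    then show ?thesis
      using lambda_p_le[of p y] bregman_pow_unit_gap_explicit[OF p that] p that by simp
  next
    case False
    then have "bregman_pow p 1 (1 - 1) \<le> bregman_pow p y (y - 1)"
      by (intro bregman_pow_unit_gap_mono[OF p]) auto
    then show ?thesis
      using lambda_p_le[of p 1] bregman_pow_unit_gap_explicit[OF p, of 1] p by simp
  qed
  show ?thesis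
  proof (cases "x \<ge> 1/2")
    case False
    then show ?thesis
      using right_half[of "1 - x"] bregman_pow_unit_gap_reflect[OF p, of x] by simp
  qed (rule right_half)
qed

lemma bregman_pow_ge_lambda_p:
  assumes p: "p \<ge> 2"
  shows "lambda_p p * \<bar>a - b\<bar> powr p \<le> bregman_pow p a b"
proof (cases "a = b")
  case True
  then show ?thesis using p by (simp add: bregman_pow_eq_integral)
next
  case False
  define d where "d = a - b"
  then have "d \<noteq> 0" using False by simp
  then have "bregman_pow p a b = bregman_pow p (d * (a / d)) (d * (a / d - 1))"
    by (simp add: d_def right_diff_distrib)
  also have "\<dots> = \<bar>d\<bar> powr p * bregman_pow p (a / d) (a / d - 1)"
    by (rule bregman_pow_scale[OF p])
  also have "\<dots> \<ge> \<bar>d\<bar> powr p * lambda_p p"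
    by (intro mult_left_mono lambda_p_le_bregman_pow_unit_gap[OF p]) auto
  finally show ?thesis by (simp add: d_def mult.commute)
qed

lemma abs_abspow_mult_le:
  assumes p: "p \<ge> 2"
  shows "\<bar>abspow b (p - 2) * b * a\<bar> \<le> \<bar>a\<bar> powr p + \<bar>b\<bar> powr p"
proof -
  have pow: "\<bar>z\<bar> powr p = \<bar>z\<bar> powr (p - 1) * \<bar>z\<bar>" for z
    using powr_add[of "\<bar>z\<bar>" "p - 1" 1] by simp
  have "\<bar>abspow b (p - 2) * b * a\<bar> = abspow \<bar>b\<bar> (p - 2) * \<bar>b\<bar> * \<bar>a\<bar>"
    by (simp add: abs_mult abspow_nonneg)
  also have "\<dots> = \<bar>b\<bar> powr (p - 1) * \<bar>a\<bar>"
    using abspow_mult_self_eq_powr[OF p, of "\<bar>b\<bar>"] by simp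
  also have "\<dots> \<le> max (\<bar>a\<bar> powr p) (\<bar>b\<bar> powr p)"
  proof (cases "\<bar>a\<bar> \<le> \<bar>b\<bar>")
    case True
    then have "\<bar>b\<bar> powr (p - 1) * \<bar>a\<bar> \<le> \<bar>b\<bar> powr p"
      unfolding pow by (intro mult_left_mono) auto
    then show ?thesis by simp
  next
    case False
    then have "\<bar>b\<bar> powr (p - 1) * \<bar>a\<bar> \<le> \<bar>a\<bar> powr p"
      unfolding pow using p by (intro mult_right_mono powr_mono2) auto
    then show ?thesis by simp
  qed
  also have "\<dots> \<le> \<bar>a\<bar> powr p + \<bar>b\<bar> powr p"
    by simp
  finally show ?thesis .
qed

lemma
  assumes p: "p \<ge> 2" and f: "in_Lp p D f" and g: "in_Lp p D g"
  shows integrable_bregman_pow: "integrable (lebesgue_on D) (\<lambda>x. bregman_pow p (f x) (g x))"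
    and Efun_eq_integral_bregman_pow: "Efun p D f g = (\<integral>x. bregman_pow p (f x) (g x) \<partial>lebesgue_on D)"
proof -
  let ?M = "lebesgue_on D"
  have meas: "f \<in> borel_measurable ?M" "g \<in> borel_measurable ?M"
    and int_pow: "integrable ?M (\<lambda>x. \<bar>f x\<bar> powr p)" "integrable ?M (\<lambda>x. \<bar>g x\<bar> powr p)"
    using f g by (auto simp: in_Lp_def)
  have "(\<lambda>x. abspow (g x) (p - 2) * g x * f x) \<in> borel_measurable ?M"
    unfolding abspow_def using meas by measurable
  then have int_cross: "integrable ?M (\<lambda>x. abspow (g x) (p - 2) * g x * f x)"
    by (rule Bochner_Integration.integrable_bound[OF Bochner_Integration.integrable_add[OF int_pow]])
       (auto intro!: AE_I2 abs_abspow_mult_le[OF p, THEN order_trans])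
  show "integrable ?M (\<lambda>x. bregman_pow p (f x) (g x))"
    unfolding bregman_pow_def using int_pow int_cross by auto
  show "Efun p D f g = (\<integral>x. bregman_pow p (f x) (g x) \<partial>?M)"
    unfolding bregman_pow_def Efun_def using int_pow int_cross by simp
qed

lemma wfun_mult_diff_square:
  assumes p: "p \<ge> 2"
  shows "(wfun p f g x * (f x - g x))\<^sup>2 = bregman_pow p (f x) (g x)"
proof -
  have "0 \<le> integral {0..1} (\<lambda>s. s * abspow (s * g x + (1 - s) * f x) (p - 2))"
    using p by (intro integral_nonneg integrable_continuous_interval continuous_intros
        continuous_on_abspow mult_nonneg_nonneg abspow_nonneg) auto
  then show ?thesis
    using p by (simp add: wfun_def bregman_pow_eq_integral power_mult_distrib)
qed

lemma
  assumes p: "p \<ge> 2" and f: "in_Lp p D f" and g: "in_Lp p D g"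
  shows integral_bregman_pow_ge_lambda_p:
      "lambda_p p * (\<integral>x. \<bar>f x - g x\<bar> powr p \<partial>lebesgue_on D)
        \<le> (\<integral>x. bregman_pow p (f x) (g x) \<partial>lebesgue_on D)"
    and integral_bregman_pow_ge_weighted_square:
      "p / 2 * (\<integral>x. abspow (g x) (p - 2) * (f x - g x)\<^sup>2 \<partial>lebesgue_on D)
        \<le> (\<integral>x. bregman_pow p (f x) (g x) \<partial>lebesgue_on D)"
proof -
  note int = integrable_bregman_pow[OF p f g]
  have "(\<integral>x. lambda_p p * \<bar>f x - g x\<bar> powr p \<partial>lebesgue_on D)
      \<le> (\<integral>x. bregman_pow p (f x) (g x) \<partial>lebesgue_on D)"
    by (rule integral_mono'[OF int]) (rule bregman_pow_ge_lambda_p[OF p] bregman_pow_nonneg[OF p])+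
  then show "lambda_p p * (\<integral>x. \<bar>f x - g x\<bar> powr p \<partial>lebesgue_on D)
      \<le> (\<integral>x. bregman_pow p (f x) (g x) \<partial>lebesgue_on D)"
    by simp
  have "(\<integral>x. p / 2 * abspow (g x) (p - 2) * (f x - g x)\<^sup>2 \<partial>lebesgue_on D)
      \<le> (\<integral>x. bregman_pow p (f x) (g x) \<partial>lebesgue_on D)"
    by (rule integral_mono'[OF int]) (rule bregman_pow_ge_weighted_square[OF p] bregman_pow_nonneg[OF p])+
  then show "p / 2 * (\<integral>x. abspow (g x) (p - 2) * (f x - g x)\<^sup>2 \<partial>lebesgue_on D)
      \<le> (\<integral>x. bregman_pow p (f x) (g x) \<partial>lebesgue_on D)"
    by (simp add: mult.assoc)
qed

theorem mainTheorem12: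
  fixes D :: "(real ^ 'n) set" and p :: real
  assumes "open D" and "connected D" and "D \<noteq> {}" and "p \<ge> 2"
  shows "lambda_p p \<in> {2 powr (-p) .. p * 2 powr (1 - p)}
    \<and> lambda_p 2 = 1
    \<and> (\<forall>f g. in_Lp p D f \<longrightarrow> in_Lp p D g \<longrightarrow>
          integrable (lebesgue_on D) (\<lambda>x. (wfun p f g x * (f x - g x))\<^sup>2)
          \<and> Efun p D f g = (\<integral>x. (wfun p f g x * (f x - g x))\<^sup>2 \<partial>lebesgue_on D)
          \<and> (\<integral>x. (wfun p f g x * (f x - g x))\<^sup>2 \<partial>lebesgue_on D)
               \<ge> lambda_p p * (\<integral>x. \<bar>f x - g x\<bar> powr p \<partial>lebesgue_on D)
          \<and> (\<integral>x. (wfun p f g x * (f x - g x))\<^sup>2 \<partial>lebesgue_on D)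
               \<ge> p / 2 * (\<integral>x. abspow (g x) (p - 2) * (f x - g x)\<^sup>2 \<partial>lebesgue_on D))"
proof -
  have p: "p \<ge> 2" by fact
  then have "lambda_p p \<in> {2 powr (-p) .. p * 2 powr (1 - p)}"
    by (intro lambda_p_bounds) simp
  then show ?thesis
    unfolding wfun_mult_diff_square[OF p]
    using lambda_p_two
      integrable_bregman_pow[OF p, where D = D] Efun_eq_integral_bregman_pow[OF p, where D = D]
      integral_bregman_pow_ge_lambda_p[OF p, where D = D]
      integral_bregman_pow_ge_weighted_square[OF p, where D = D]
    by blast
qed

end
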